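(* For every $n\ge 1$ and every Boolean function $f:\{-1,1\}^n\to\{-1,1\}$, we have $s(f)\ge \sqrt{\deg(f)}$.
   Context: For $x\in\{-1,1\}^n$, the sensitivity $s(f,x)$ is the number of indices $i\in[n]$ such that $f(x)\ne f(x^{(i)})$, where $x^{(i)}$ is $x$ with its $i$-th coordinate negated; $s(f)=\max_x s(f,x)$. $\deg(f)$ is the degree of the unique multilinear real polynomial agreeing with $f$ on $\{-1,1\}^n$. *)

theory Defs
  imports Complex_Main
begin

text \<open>The hypercube {-1,1}^n, encoded as functions nat => real that take values
  in {-1,1} on coordinates 0..n-1 and are fixed to 1 outside (canonical padding).\<close>
definition cube :: "nat \<Rightarrow> (nat \<Rightarrow> real) set" where
  "cube n = {x. (\<forall>i<n. x i = 1 \<or> x i = -1) \<and> (\<forall>i\<ge>n. x i = 1)}"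

definition flip :: "(nat \<Rightarrow> real) \<Rightarrow> nat \<Rightarrow> (nat \<Rightarrow> real)" where
  "flip x i = x(i := - x i)"

definition boolean_fun :: "nat \<Rightarrow> ((nat \<Rightarrow> real) \<Rightarrow> real) \<Rightarrow> bool" where
  "boolean_fun n f \<longleftrightarrow> (\<forall>x\<in>cube n. f x = 1 \<or> f x = -1)"

definition sens_at :: "nat \<Rightarrow> ((nat \<Rightarrow> real) \<Rightarrow> real) \<Rightarrow> (nat \<Rightarrow> real) \<Rightarrow> nat" where
  "sens_at n f x = card {i. i < n \<and> f x \<noteq> f (flip x i)}"

definition sensitivity :: "nat \<Rightarrow> ((nat \<Rightarrow> real) \<Rightarrow> real) \<Rightarrow> nat" where
  "sensitivity n f = Max (sens_at n f ` cube n)"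

definition mdeg :: "nat \<Rightarrow> ((nat \<Rightarrow> real) \<Rightarrow> real) \<Rightarrow> nat" where
  "mdeg n f = (LEAST d. \<exists>c :: nat set \<Rightarrow> real.
      (\<forall>S. d < card S \<longrightarrow> c S = 0) \<and>
      (\<forall>x\<in>cube n. f x = (\<Sum>S\<in>Pow {..<n}. c S * (\<Prod>i\<in>S. x i))))"

end

theory Submission
  imports Defs
begin

text \<open>
  The signed adjacency matrix \<open>A\<close> of the \<open>d\<close>-cube satisfies \<open>A\<^sup>2 = d\<close>, so its
  \<open>\<surd>d\<close>-eigenspace has dimension \<open>2\<^sup>d\<^sup>-\<^sup>1\<close>; it therefore meets the space of vectors supported on any
  set \<open>H\<close> of more than \<open>2\<^sup>d\<^sup>-\<^sup>1\<close> vertices, and looking at the largest entry of such an eigenvector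
  gives a vertex of \<open>H\<close> with at least \<open>\<surd>d\<close> neighbours in \<open>H\<close>.
  If \<open>f\<close> has degree \<open>d\<close> with top monomial \<open>x\<^sub>S\<^sub>0\<close>, fix the coordinates outside \<open>S\<^sub>0\<close> to \<open>1\<close> and twist
  by the parity on \<open>S\<^sub>0\<close>: the resulting \<open>\<plusminus>1\<close>-valued function on the \<open>d\<close>-cube has nonzero sum
  (a multiple of the top coefficient), so one of its level sets has more than \<open>2\<^sup>d\<^sup>-\<^sup>1\<close> elements.
  Neighbours inside a level set of the twisted function are exactly sensitive coordinates of \<open>f\<close>.
\<close>

section \<open>Underdetermined linear systems\<close>

lemma underdetermined_system_nontrivial_solution:
  fixes a :: "'c \<Rightarrow> 'x \<Rightarrow> real"
  assumes "finite C" "finite X" "card C < card X"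
  shows "\<exists>w. (\<forall>x. x \<notin> X \<longrightarrow> w x = 0) \<and> (\<exists>x\<in>X. w x \<noteq> 0) \<and>
             (\<forall>c\<in>C. (\<Sum>x\<in>X. a c x * w x) = 0)"
  using assms
proof (induction C arbitrary: X a rule: finite_induct)
  case empty
  then obtain x where "x \<in> X" by fastforce
  then show ?case by (intro exI[of _ "\<lambda>y. if y = x then 1 else 0"]) auto
next
  case (insert c C)
  show ?case
  proof (cases "\<forall>x\<in>X. a c x = 0")
    case True
    have "card C < card X" using insert by simp
    with insert.IH[OF insert.prems(1)] obtain w where
      "\<forall>x. x \<notin> X \<longrightarrow> w x = 0" "\<exists>x\<in>X. w x \<noteq> 0" "\<forall>c\<in>C. (\<Sum>x\<in>X. a c x * w x) = 0"
      by blast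
    with True show ?thesis by (intro exI[of _ w]) auto
  next
    case False
    then obtain s where s: "s \<in> X" "a c s \<noteq> 0" by auto
    define X' where "X' = X - {s}"
    \<comment> \<open>Gaussian elimination of the unknown \<open>s\<close> using the equation \<open>c\<close>.\<close>
    define a' where "a' c' x = a c' x - a c' s * a c x / a c s" for c' x
    have "card C < card X'" using insert s by (simp add: X'_def)
    with insert.IH[of X' a'] insert.prems obtain w' where
      w': "\<forall>x. x \<notin> X' \<longrightarrow> w' x = 0" "\<exists>x\<in>X'. w' x \<noteq> 0" "\<forall>c\<in>C. (\<Sum>x\<in>X'. a' c x * w' x) = 0"
      by (auto simp: X'_def)
    define w where "w = w'(s := - (\<Sum>x\<in>X'. a c x * w' x) / a c s)"
    have sum_X: "(\<Sum>x\<in>X. b x * w x) = b s * w s + (\<Sum>x\<in>X'. b x * w' x)" for b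
      using s insert.prems(1) by (simp add: X'_def w_def sum.remove)
    have "(\<Sum>x\<in>X. a c' x * w x) = 0" if "c' \<in> C" for c'
    proof -
      have "(\<Sum>x\<in>X'. a' c' x * w' x)
              = (\<Sum>x\<in>X'. a c' x * w' x) - a c' s / a c s * (\<Sum>x\<in>X'. a c x * w' x)"
        by (simp add: a'_def sum_distrib_left sum_subtractf[symmetric] field_simps)
      with w'(3) that show ?thesis unfolding sum_X by (simp add: w_def)
    qed
    moreover have "(\<Sum>x\<in>X. a c x * w x) = 0" using s unfolding sum_X by (simp add: w_def)
    moreover have "\<forall>x. x \<notin> X \<longrightarrow> w x = 0" "\<exists>x\<in>X. w x \<noteq> 0"
      using w'(1,2) s by (auto simp: w_def X'_def)
    ultimately show ?thesis by (intro exI[of _ w]) auto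
  qed
qed

section \<open>Huang's signed adjacency matrix of the cube\<close>

definition toggle :: "'a set \<Rightarrow> 'a \<Rightarrow> 'a set" where
  "toggle S i = (if i \<in> S then S - {i} else insert i S)"

definition huang_sign :: "'a::linorder set \<Rightarrow> 'a \<Rightarrow> real" where
  "huang_sign S i = (-1) ^ card {j\<in>S. i < j}"

text \<open>The edge \<open>{S, toggle S i}\<close> carries the sign \<open>huang_sign S i\<close>, the same from either endpoint.
  The product of the signs around every square face is \<open>-1\<close>, which makes the square of this
  signed adjacency matrix \<open>card I\<close> times the identity.\<close>
definition huang_op :: "'a::linorder set \<Rightarrow> ('a set \<Rightarrow> real) \<Rightarrow> 'a set \<Rightarrow> real" where
  "huang_op I w S = (\<Sum>i\<in>I. huang_sign S i * w (toggle S i))"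

lemma toggle_toggle [simp]: "toggle (toggle S i) i = S"
  by (auto simp: toggle_def)

lemma toggle_commute: "toggle (toggle S i) j = toggle (toggle S j) i"
  by (auto simp: toggle_def)

lemma toggle_subset_iff: "i \<in> I \<Longrightarrow> toggle S i \<subseteq> I \<longleftrightarrow> S \<subseteq> I"
  by (auto simp: toggle_def)

lemma neg_one_power_card_toggle:
  assumes "finite A"
  shows "(-1::real) ^ card (toggle A j) = - ((-1) ^ card A)"
proof (cases "j \<in> A")
  case True
  then have "card A = Suc (card (A - {j}))" using card_Suc_Diff1[OF assms] by simp
  then have "(-1::real) ^ card A = - ((-1) ^ card (A - {j}))" by (metis power_Suc mult_minus1)
  with True show ?thesis by (simp add: toggle_def)
qed (simp add: assms toggle_def)

lemma huang_sign_square: "huang_sign S i * huang_sign S i = 1"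
  by (simp add: huang_sign_def flip: power_add)

lemma abs_huang_sign [simp]: "\<bar>huang_sign S i\<bar> = 1"
  by (simp add: huang_sign_def)

lemma huang_sign_toggle_same: "huang_sign (toggle S i) i = huang_sign S i"
proof -
  have "{j\<in>toggle S i. i < j} = {j\<in>S. i < j}" by (auto simp: toggle_def)
  then show ?thesis by (simp add: huang_sign_def)
qed

lemma huang_sign_toggle_less: "i < j \<Longrightarrow> huang_sign (toggle S i) j = huang_sign S j"
proof -
  assume "i < j"
  then have "{k\<in>toggle S i. j < k} = {k\<in>S. j < k}" by (auto simp: toggle_def)
  then show ?thesis by (simp add: huang_sign_def)
qed

lemma huang_sign_toggle_greater:
  "finite S \<Longrightarrow> i < j \<Longrightarrow> huang_sign (toggle S j) i = - huang_sign S i"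
proof -
  assume "finite S" "i < j"
  then have "{k\<in>toggle S j. i < k} = toggle {k\<in>S. i < k} j" by (auto simp: toggle_def)
  with \<open>finite S\<close> show ?thesis by (simp add: huang_sign_def neg_one_power_card_toggle)
qed

lemma huang_op_squared:
  assumes "finite I" "finite S"
  shows "huang_op I (huang_op I w) S = real (card I) * w S"
proof -
  define F where "F i j = huang_sign S i * huang_sign (toggle S i) j * w (toggle (toggle S i) j)"
    for i j
  define K where "K i j = (if i = j then 0 else F i j)" for i j
  have F_antisym: "F j i = - F i j" if "i \<noteq> j" for i j
    using that assms(2) by (cases "i < j")
      (auto simp: F_def huang_sign_toggle_less huang_sign_toggle_greater toggle_commute[of S i j])
  have K_antisym: "K j i = - K i j" for i j
    using F_antisym[of i j] by (simp add: K_def)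
  have "(\<Sum>i\<in>I. \<Sum>j\<in>I. K i j) = (\<Sum>j\<in>I. \<Sum>i\<in>I. - K j i)"
    by (subst sum.swap) (intro sum.cong refl, metis K_antisym minus_minus)
  then have K_sum: "(\<Sum>i\<in>I. \<Sum>j\<in>I. K i j) = 0"
    by (simp add: sum_negf)
  have "huang_op I (huang_op I w) S = (\<Sum>i\<in>I. \<Sum>j\<in>I. F i j)"
    by (simp add: huang_op_def F_def sum_distrib_left mult.assoc)
  also have "\<dots> = (\<Sum>i\<in>I. \<Sum>j\<in>I. (if i = j then w S else 0) + K i j)"
    by (intro sum.cong refl)
      (simp add: K_def F_def huang_sign_toggle_same huang_sign_square)
  also have "\<dots> = real (card I) * w S"
    using assms(1) K_sum by (simp add: sum.distrib)
  finally show ?thesis .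
qed

lemma huang_op_shifted_eigen:
  assumes "finite I" "finite S"
  shows "huang_op I (\<lambda>R. huang_op I w R + sqrt (card I) * w R) S
           = sqrt (card I) * (huang_op I w S + sqrt (card I) * w S)"
proof -
  have "huang_op I (\<lambda>R. huang_op I w R + sqrt (card I) * w R) S
          = huang_op I (huang_op I w) S + sqrt (card I) * huang_op I w S"
    by (simp add: huang_op_def sum.distrib sum_distrib_left algebra_simps)
  then show ?thesis using huang_op_squared[OF assms, of w] by (simp add: algebra_simps)
qed

lemma huang_op_expand:
  assumes "finite X" "\<forall>S. S \<notin> X \<longrightarrow> w S = 0"
  shows "huang_op I w R = (\<Sum>x\<in>X. huang_op I (\<lambda>S. if S = x then 1 else 0) R * w x)"
proof -
  have "w (toggle R i) = (\<Sum>x\<in>X. (if toggle R i = x then 1 else 0) * w x)" for i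
    using assms by (cases "toggle R i \<in> X") (simp_all add: if_distrib[of "\<lambda>a. a * _"] cong: if_cong)
  then have "huang_op I w R
               = (\<Sum>i\<in>I. \<Sum>x\<in>X. huang_sign R i * (if toggle R i = x then 1 else 0) * w x)"
    unfolding huang_op_def by (simp only: sum_distrib_left mult.assoc)
  also have "\<dots> = (\<Sum>x\<in>X. (\<Sum>i\<in>I. huang_sign R i * (if toggle R i = x then 1 else 0)) * w x)"
    by (subst sum.swap) (simp only: sum_distrib_right)
  finally show ?thesis by (simp only: huang_op_def)
qed

lemma huang_op_insert:
  assumes "finite I" "m \<in> I" "\<forall>S. \<not> S \<subseteq> I - {m} \<longrightarrow> w S = 0" "m \<notin> S"
  shows "huang_op I w (insert m S) = huang_sign (insert m S) m * w S"
proof -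
  have vanish: "huang_sign (insert m S) i * w (toggle (insert m S) i) = 0" if "i \<in> I - {m}" for i
  proof -
    have "m \<in> toggle (insert m S) i" using that by (auto simp: toggle_def)
    then show ?thesis using assms(3) by auto
  qed
  have "(\<Sum>i\<in>I - {m}. huang_sign (insert m S) i * w (toggle (insert m S) i)) = 0"
    by (simp add: vanish)
  moreover have "toggle (insert m S) m = S" using assms(4) by (auto simp: toggle_def)
  ultimately show ?thesis
    using assms(1,2) by (simp add: huang_op_def sum.remove)
qed

lemma card_Pow_Diff_less_card_Pow_remove:
  assumes "finite I" "m \<in> I" "H \<subseteq> Pow I" "2 ^ card I < 2 * card H"
  shows "card (Pow I - H) < card (Pow (I - {m}))"
proof -
  have "card (Pow (I - {m})) = 2 ^ (card I - 1)" "card (Pow I - H) = 2 ^ card I - card H"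
    using assms(1-3) finite_subset[OF assms(3)] by (simp_all add: card_Pow card_Diff_subset)
  moreover have "(2::nat) ^ card I = 2 * 2 ^ (card I - 1)"
    using assms(1,2) by (metis power_Suc Suc_diff_1 card_gt_0_iff empty_iff)
  moreover have "card H \<le> 2 ^ card I"
    using card_mono[OF _ assms(3)] assms(1) by (simp add: card_Pow)
  ultimately show ?thesis using assms(4) by linarith
qed

text \<open>The eigenvector is \<open>A w + \<surd>d w\<close> for a \<open>w\<close> supported on the half cube \<open>{S. m \<notin> S}\<close>; the conditions
  \<open>(A w + \<surd>d w) S = 0\<close> for \<open>S \<notin> H\<close> are fewer than \<open>2\<^sup>d\<^sup>-\<^sup>1\<close> linear equations in \<open>w\<close>.\<close>
lemma huang_eigenvector_supported_on:
  assumes "finite I" "I \<noteq> {}" "H \<subseteq> Pow I" "2 ^ card I < 2 * card H"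
  shows "\<exists>v. (\<exists>S\<in>Pow I. v S \<noteq> 0) \<and> (\<forall>S\<in>Pow I - H. v S = 0) \<and>
             (\<forall>S\<in>Pow I. huang_op I v S = sqrt (card I) * v S)"
proof -
  define r where "r = sqrt (card I)"
  obtain m where m: "m \<in> I" using assms(2) by blast
  define X where "X = Pow (I - {m})"
  define C where "C = Pow I - H"
  define e where "e R x = huang_op I (\<lambda>S. if S = x then 1 else 0) R + (if R = x then r else 0)"
    for R x
  have "card C < card X"
    using card_Pow_Diff_less_card_Pow_remove[OF assms(1) m assms(3,4)] by (simp add: C_def X_def)
  then obtain w where w_support: "\<forall>S. S \<notin> X \<longrightarrow> w S = 0" and "\<exists>S\<in>X. w S \<noteq> 0"
    and w_eqs: "\<forall>R\<in>C. (\<Sum>x\<in>X. e R x * w x) = 0"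
    using underdetermined_system_nontrivial_solution[of C X e] assms(1)
    by (auto simp: X_def C_def)
  then obtain S1 where S1: "S1 \<subseteq> I - {m}" "w S1 \<noteq> 0" by (auto simp: X_def)
  define v where "v R = huang_op I w R + r * w R" for R
  have "(\<Sum>x\<in>X. e R x * w x) = v R" for R
  proof -
    have "(\<Sum>x\<in>X. e R x * w x) = (\<Sum>x\<in>X. huang_op I (\<lambda>S. if S = x then 1 else 0) R * w x)
                                   + (\<Sum>x\<in>X. if R = x then r * w x else 0)"
      by (simp add: e_def distrib_right sum.distrib if_distrib[of "\<lambda>a. a * _"] cong: if_cong)
    also have "\<dots> = v R"
      using assms(1) w_support huang_op_expand[of X w I R]
      by (cases "R \<in> X") (simp_all add: v_def X_def)
    finally show ?thesis .
  qed
  then have "\<forall>S\<in>Pow I - H. v S = 0" using w_eqs by (simp add: C_def)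
  moreover have "v (insert m S1) = huang_sign (insert m S1) m * w S1"
  proof -
    have w_half: "\<forall>S. \<not> S \<subseteq> I - {m} \<longrightarrow> w S = 0" using w_support by (simp add: X_def)
    moreover have "m \<notin> S1" using S1 by blast
    ultimately show ?thesis using huang_op_insert[OF assms(1) m w_half] by (simp add: v_def)
  qed
  then have "v (insert m S1) \<noteq> 0" using S1 by (simp add: huang_sign_def)
  then have "\<exists>S\<in>Pow I. v S \<noteq> 0" using S1 m by blast
  moreover have "huang_op I v S = r * v S" if "S \<in> Pow I" for S
    using huang_op_shifted_eigen[OF assms(1) finite_subset[OF _ assms(1)], of S w] that
    by (simp add: v_def[abs_def] r_def)
  ultimately show ?thesis unfolding r_def by blast
qed

text \<open>Evaluate the eigenvalue equation at an entry of maximal modulus.\<close>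
lemma huang_eigenvalue_le_degree:
  assumes "finite I" "H \<subseteq> Pow I" "\<exists>S\<in>Pow I. v S \<noteq> 0" "\<forall>S\<in>Pow I - H. v S = 0"
    and eigen: "\<forall>S\<in>Pow I. huang_op I v S = \<mu> * v S"
  shows "\<exists>S\<in>H. \<bar>\<mu>\<bar> \<le> real (card {i\<in>I. toggle S i \<in> H})"
proof -
  define M where "M = Max ((\<lambda>R. \<bar>v R\<bar>) ` Pow I)"
  have M_ge: "\<bar>v R\<bar> \<le> M" if "R \<in> Pow I" for R
    using assms(1) that by (simp add: M_def)
  have "M \<in> (\<lambda>R. \<bar>v R\<bar>) ` Pow I"
    unfolding M_def using assms(1) by (intro Max_in) auto
  then obtain S where S: "S \<in> Pow I" "\<bar>v S\<bar> = M" by blast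
  obtain S' where "S' \<in> Pow I" "v S' \<noteq> 0" using assms(3) by blast
  then have "M > 0" using M_ge[of S'] by linarith
  then have "S \<in> H" using S assms(4) by auto
  have "\<bar>\<mu>\<bar> * M = \<bar>huang_op I v S\<bar>" using eigen S by (simp add: abs_mult)
  also have "\<dots> \<le> (\<Sum>i\<in>I. \<bar>v (toggle S i)\<bar>)"
    unfolding huang_op_def by (rule order_trans[OF sum_abs]) (simp add: abs_mult)
  also have "\<dots> \<le> (\<Sum>i\<in>I. if toggle S i \<in> H then M else 0)"
  proof (rule sum_mono)
    fix i assume "i \<in> I"
    then have "toggle S i \<in> Pow I" using S by (simp add: toggle_subset_iff)
    then show "\<bar>v (toggle S i)\<bar> \<le> (if toggle S i \<in> H then M else 0)"
      using M_ge assms(4) by auto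
  qed
  also have "\<dots> = real (card {i\<in>I. toggle S i \<in> H}) * M"
    using assms(1) by (simp add: sum.inter_filter[symmetric])
  finally show ?thesis using \<open>M > 0\<close> \<open>S \<in> H\<close> by auto
qed

theorem huang_induced_subgraph:
  fixes I :: "'a::linorder set"
  assumes "finite I" "I \<noteq> {}" "H \<subseteq> Pow I" "2 ^ card I < 2 * card H"
  shows "\<exists>S\<in>H. sqrt (card I) \<le> real (card {i\<in>I. toggle S i \<in> H})"
proof -
  obtain v where "\<exists>S\<in>Pow I. v S \<noteq> 0" "\<forall>S\<in>Pow I - H. v S = 0"
    "\<forall>S\<in>Pow I. huang_op I v S = sqrt (card I) * v S"
    using huang_eigenvector_supported_on[OF assms] by blast
  from huang_eigenvalue_le_degree[OF assms(1,3) this] show ?thesis by simp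
qed

section \<open>Multilinear representations on the cube\<close>

definition cube_point :: "nat set \<Rightarrow> nat \<Rightarrow> real" where
  "cube_point S i = (if i \<in> S then -1 else 1)"

definition multilinear_rep :: "nat \<Rightarrow> ((nat \<Rightarrow> real) \<Rightarrow> real) \<Rightarrow> nat \<Rightarrow> (nat set \<Rightarrow> real) \<Rightarrow> bool"
  where "multilinear_rep n f d c \<longleftrightarrow> (\<forall>S. d < card S \<longrightarrow> c S = 0) \<and>
      (\<forall>x\<in>cube n. f x = (\<Sum>S\<in>Pow {..<n}. c S * (\<Prod>i\<in>S. x i)))"

lemma mdeg_eq_Least: "mdeg n f = (LEAST d. \<exists>c. multilinear_rep n f d c)"
  by (simp add: mdeg_def multilinear_rep_def)

lemma cube_point_in_cube: "S \<subseteq> {..<n} \<Longrightarrow> cube_point S \<in> cube n"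
  by (auto simp: cube_point_def cube_def)

lemma cube_eq_image_cube_point: "cube n = cube_point ` Pow {..<n}"
proof
  show "cube n \<subseteq> cube_point ` Pow {..<n}"
  proof
    fix x assume x: "x \<in> cube n"
    then have "x = cube_point {i. i < n \<and> x i = -1}"
      by (simp add: cube_def cube_point_def fun_eq_iff) (metis not_less)
    then show "x \<in> cube_point ` Pow {..<n}" by blast
  qed
qed (auto intro: cube_point_in_cube)

lemma finite_cube: "finite (cube n)"
  by (simp add: cube_eq_image_cube_point)

lemma cube_point_toggle: "cube_point (toggle S i) = flip (cube_point S) i"
  by (auto simp: cube_point_def flip_def toggle_def)

lemma prod_cube_point: "finite T \<Longrightarrow> (\<Prod>i\<in>T. cube_point S i) = (-1) ^ card (T \<inter> S)"
  by (simp add: cube_point_def prod.If_cases Int_def)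

lemma cube_delta:
  assumes "x \<in> cube n" "z \<in> cube n"
  shows "(\<Prod>i<n. (1 + z i * x i) / 2) = (if z = x then 1 else 0)"
proof (cases "z = x")
  case True
  with assms(1) show ?thesis by (auto simp: cube_def intro!: prod.neutral)
next
  case False
  then obtain i where i: "z i \<noteq> x i" by blast
  have "i < n"
  proof (rule ccontr)
    assume "\<not> i < n"
    with i assms show False by (simp add: cube_def)
  qed
  moreover have "x i = 1 \<or> x i = -1" "z i = 1 \<or> z i = -1"
    using assms \<open>i < n\<close> by (auto simp: cube_def)
  then have "z i * x i = -1" using i by auto
  ultimately have "(\<Prod>i<n. (1 + z i * x i) / 2) = 0" by (intro prod_zero bexI[of _ i]) auto
  with False show ?thesis by simp
qed

lemma cube_delta_expand:
  fixes z x :: "nat \<Rightarrow> real"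
  shows "(\<Prod>i<n. (1 + z i * x i) / 2)
           = (\<Sum>S\<in>Pow {..<n}. (1/2) ^ n * (\<Prod>i\<in>S. z i) * (\<Prod>i\<in>S. x i))"
proof -
  have "(\<Prod>i<n. (1 + z i * x i) / 2) = (\<Prod>i<n. z i * x i + 1) / 2 ^ n"
    by (simp add: prod_dividef add.commute)
  also have "(\<Prod>i<n. z i * x i + 1) = (\<Sum>S\<in>Pow {..<n}. (\<Prod>i\<in>S. z i) * (\<Prod>i\<in>S. x i))"
    by (simp add: prod_add prod.distrib)
  finally show ?thesis by (simp add: sum_divide_distrib field_simps)
qed

lemma multilinear_rep_exists: "\<exists>c. multilinear_rep n f n c"
proof -
  define c where "c S = (if S \<subseteq> {..<n}
    then (\<Sum>z\<in>cube n. f z * ((1/2) ^ n * (\<Prod>i\<in>S. z i))) else 0)" for S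
  have "c S = 0" if "n < card S" for S
    using that card_mono[of "{..<n}" S] by (auto simp: c_def)
  moreover have "f x = (\<Sum>S\<in>Pow {..<n}. c S * (\<Prod>i\<in>S. x i))" if x: "x \<in> cube n" for x
  proof -
    have "f x = (\<Sum>z\<in>cube n. f z * (\<Prod>i<n. (1 + z i * x i) / 2))"
      using x finite_cube[of n] by (simp add: cube_delta if_distrib cong: if_cong)
    also have "\<dots> = (\<Sum>S\<in>Pow {..<n}. \<Sum>z\<in>cube n.
                        f z * ((1/2) ^ n * (\<Prod>i\<in>S. z i)) * (\<Prod>i\<in>S. x i))"
      by (subst sum.swap) (simp add: cube_delta_expand sum_distrib_left mult.assoc)
    also have "\<dots> = (\<Sum>S\<in>Pow {..<n}. c S * (\<Prod>i\<in>S. x i))"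
      by (intro sum.cong refl) (simp add: c_def sum_distrib_right)
    finally show ?thesis .
  qed
  ultimately show ?thesis by (auto simp: multilinear_rep_def)
qed

lemma mdeg_rep_with_top_coeff:
  assumes "0 < mdeg n f"
  obtains c S0 where "multilinear_rep n f (mdeg n f) c"
    "S0 \<subseteq> {..<n}" "card S0 = mdeg n f" "c S0 \<noteq> 0"
proof -
  let ?D = "mdeg n f"
  have "\<exists>d c. multilinear_rep n f d c" using multilinear_rep_exists by blast
  from LeastI_ex[OF this] obtain c where c: "multilinear_rep n f ?D c"
    by (auto simp: mdeg_eq_Least)
  have "\<exists>S0. S0 \<subseteq> {..<n} \<and> card S0 = ?D \<and> c S0 \<noteq> 0"
  proof (rule ccontr)
    assume no_top: "\<not> ?thesis"
    \<comment> \<open>otherwise the truncation of \<open>c\<close> is a representation of degree \<open>D - 1\<close>\<close>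
    have "multilinear_rep n f (?D - 1) (\<lambda>S. if card S < ?D then c S else 0)"
      using c no_top unfolding multilinear_rep_def
      by (auto intro!: sum.cong simp: not_less_iff_gr_or_eq)
    then have "\<exists>c. multilinear_rep n f (?D - 1) c" by blast
    then have "?D \<le> ?D - 1" unfolding mdeg_eq_Least by (rule Least_le)
    with assms show False by simp
  qed
  with c that show ?thesis by blast
qed

lemma sum_Pow_neg_one_power_card_inter:
  assumes "finite F"
  shows "(\<Sum>S\<in>Pow F. (-1::real) ^ card S * (-1) ^ card (T \<inter> S))
           = (if F \<subseteq> T then 2 ^ card F else 0)"
  using assms
proof (induction F rule: finite_induct)
  case (insert a F)
  define g where "g S = (-1::real) ^ card S * (-1) ^ card (T \<inter> S)" for S
  define \<sigma> where "\<sigma> = (if a \<in> T then 1 else -1 :: real)"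
  have g_insert: "g (insert a S) = \<sigma> * g S" if "S \<in> Pow F" for S
  proof -
    have "a \<notin> S" "finite S" using that insert by (auto intro: finite_subset)
    moreover have "T \<inter> insert a S = (if a \<in> T then insert a (T \<inter> S) else T \<inter> S)" by auto
    ultimately show ?thesis by (simp add: g_def \<sigma>_def)
  qed
  have "inj_on (insert a) (Pow F)"
    using insert by (intro inj_onI) (metis Diff_insert_absorb PowD subsetD)
  then have "(\<Sum>S\<in>Pow (insert a F). g S) = (\<Sum>S\<in>Pow F. g S) + (\<Sum>S\<in>Pow F. g (insert a S))"
    unfolding Pow_insert using insert by (subst sum.union_disjoint) (auto simp: sum.reindex)
  also have "(\<Sum>S\<in>Pow F. g (insert a S)) = \<sigma> * (\<Sum>S\<in>Pow F. g S)"
    by (simp add: g_insert sum_distrib_left)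
  finally show ?case using insert by (simp add: g_def \<sigma>_def)
qed simp

definition parity_twist :: "((nat \<Rightarrow> real) \<Rightarrow> real) \<Rightarrow> nat set \<Rightarrow> real" where
  "parity_twist f S = (-1) ^ card S * f (cube_point S)"

lemma boolean_fun_cube_point:
  "boolean_fun n f \<Longrightarrow> S \<subseteq> {..<n} \<Longrightarrow> f (cube_point S) = 1 \<or> f (cube_point S) = -1"
  using cube_point_in_cube[of S n] by (simp add: boolean_fun_def)

lemma parity_twist_pm_one:
  assumes "boolean_fun n f" "S \<subseteq> {..<n}"
  shows "parity_twist f S = 1 \<or> parity_twist f S = -1"
  using boolean_fun_cube_point[OF assms]
  by (cases "even (card S)") (auto simp: parity_twist_def)

text \<open>Summing the parity twist over the subcube \<open>Pow S\<^sub>0\<close> extracts the coefficient of \<open>x\<^sub>S\<^sub>0\<close>: only the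
  monomials \<open>x\<^sub>T\<close> with \<open>S\<^sub>0 \<subseteq> T\<close> survive, and among them only \<open>T = S\<^sub>0\<close> has degree \<open>\<le> card S\<^sub>0\<close>.\<close>
lemma sum_parity_twist_top_coeff:
  assumes c: "multilinear_rep n f d c" and S0: "S0 \<subseteq> {..<n}" "card S0 = d"
  shows "(\<Sum>S\<in>Pow S0. parity_twist f S) = c S0 * 2 ^ d"
proof -
  have fin: "finite T" if "T \<subseteq> {..<n}" for T using that finite_subset by blast
  have top: "c T * (\<Sum>S\<in>Pow S0. (-1) ^ card S * (-1) ^ card (T \<inter> S))
              = (if T = S0 then c S0 * 2 ^ d else 0)" if "T \<subseteq> {..<n}" for T
  proof -
    have sum_S0: "(\<Sum>S\<in>Pow S0. (-1::real) ^ card S * (-1) ^ card (T \<inter> S))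
                    = (if S0 \<subseteq> T then 2 ^ d else 0)"
      using sum_Pow_neg_one_power_card_inter[OF fin[OF S0(1)], of T] S0(2) by simp
    consider "T = S0" | "S0 \<subset> T" | "\<not> S0 \<subseteq> T" by blast
    then show ?thesis
    proof cases
      case 2
      then have "d < card T" using S0 fin[OF that] by (metis psubset_card_mono)
      then show ?thesis using c 2 by (auto simp: multilinear_rep_def)
    qed (use sum_S0 in auto)
  qed
  have "(\<Sum>S\<in>Pow S0. parity_twist f S)
          = (\<Sum>S\<in>Pow S0. \<Sum>T\<in>Pow {..<n}. (-1) ^ card S * (c T * (\<Prod>i\<in>T. cube_point S i)))"
    using c S0 by (intro sum.cong refl)
      (auto simp: multilinear_rep_def parity_twist_def cube_point_in_cube sum_distrib_left)
  also have "\<dots> = (\<Sum>T\<in>Pow {..<n}. c T * (\<Sum>S\<in>Pow S0. (-1) ^ card S * (-1) ^ card (T \<inter> S)))"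
    by (subst sum.swap) (auto intro!: sum.cong simp: prod_cube_point fin sum_distrib_left mult_ac)
  also have "\<dots> = (\<Sum>T\<in>Pow {..<n}. if T = S0 then c S0 * 2 ^ d else 0)"
    using top by (intro sum.cong refl) blast
  also have "\<dots> = c S0 * 2 ^ d" using S0 by simp
  finally show ?thesis .
qed

section \<open>Sensitivity\<close>

lemma sens_at_le_sensitivity: "x \<in> cube n \<Longrightarrow> sens_at n f x \<le> sensitivity n f"
  unfolding sensitivity_def by (rule Max_ge) (auto simp: finite_cube)

lemma pm_one_level_set_majority:
  fixes g :: "'a \<Rightarrow> real"
  assumes "finite A" "\<forall>x\<in>A. g x = 1 \<or> g x = -1" "sum g A \<noteq> 0"
  obtains s where "card A < 2 * card {x\<in>A. g x = s}"
proof -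
  let ?P = "{x\<in>A. g x = 1}" and ?N = "{x\<in>A. g x = -1}"
  have PN: "?P \<union> ?N = A" "?P \<inter> ?N = {}" using assms(2) by auto
  have card_A: "card A = card ?P + card ?N"
    using assms(1) card_Un_disjoint[of ?P ?N] PN by simp
  have "sum g A = sum g ?P + sum g ?N"
    using assms(1) sum.union_disjoint[of ?P ?N g] PN by simp
  also have "\<dots> = real (card ?P) - real (card ?N)" by simp
  finally have "card ?P \<noteq> card ?N" using assms(3) by auto
  with card_A consider "card A < 2 * card ?P" | "card A < 2 * card ?N" by linarith
  then show ?thesis using that by blast
qed

text \<open>Flipping a coordinate changes the parity, so it keeps the twisted value only if it changes \<open>f\<close>.\<close>
lemma parity_twist_toggle_eq_imp_sensitive:
  assumes "boolean_fun n f" "S \<subseteq> {..<n}"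
    and twist_eq: "parity_twist f (toggle S i) = parity_twist f S"
  shows "f (cube_point S) \<noteq> f (flip (cube_point S) i)"
proof
  assume same: "f (cube_point S) = f (flip (cube_point S) i)"
  have "finite S" using assms(2) finite_subset by blast
  have "(-1) ^ card S * f (cube_point S) = (-1) ^ card S * (- f (cube_point S))"
    using twist_eq same
    by (simp add: parity_twist_def neg_one_power_card_toggle[OF \<open>finite S\<close>] cube_point_toggle)
  then have "f (cube_point S) = 0" by simp
  with boolean_fun_cube_point[OF assms(1,2)] show False by simp
qed

lemma level_set_degree_le_sens_at:
  assumes "boolean_fun n f" "S \<subseteq> {..<n}" "S \<in> H" "\<forall>T\<in>H. parity_twist f T = s"
    and "I \<subseteq> {..<n}"
  shows "card {i\<in>I. toggle S i \<in> H} \<le> sens_at n f (cube_point S)"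
  unfolding sens_at_def
proof (rule card_mono)
  show "{i\<in>I. toggle S i \<in> H} \<subseteq> {i. i < n \<and> f (cube_point S) \<noteq> f (flip (cube_point S) i)}"
    using parity_twist_toggle_eq_imp_sensitive[OF assms(1,2)] assms(3-5) by auto
qed simp

theorem corollary1p3:
  fixes n :: nat and f :: "(nat \<Rightarrow> real) \<Rightarrow> real"
  assumes "n \<ge> 1" and "boolean_fun n f"
  shows "real (sensitivity n f) \<ge> sqrt (real (mdeg n f))"
proof (cases "mdeg n f = 0")
  case False
  then obtain c S0 where c: "multilinear_rep n f (mdeg n f) c"
    and S0: "S0 \<subseteq> {..<n}" "card S0 = mdeg n f" "c S0 \<noteq> 0"
    using mdeg_rep_with_top_coeff by blast
  have fin: "finite S0" and "S0 \<noteq> {}" using S0 False finite_subset by auto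
  have "\<forall>S\<in>Pow S0. parity_twist f S = 1 \<or> parity_twist f S = -1"
    using parity_twist_pm_one[OF assms(2)] S0(1) by blast
  moreover have "(\<Sum>S\<in>Pow S0. parity_twist f S) \<noteq> 0"
    using sum_parity_twist_top_coeff[OF c S0(1,2)] S0(3) by simp
  ultimately obtain s where "card (Pow S0) < 2 * card {S\<in>Pow S0. parity_twist f S = s}"
    using pm_one_level_set_majority[of "Pow S0"] fin by blast
  moreover define H where "H = {S\<in>Pow S0. parity_twist f S = s}"
  ultimately have "2 ^ card S0 < 2 * card H" using fin by (simp add: card_Pow)
  then obtain S where S: "S \<in> H" and degree: "sqrt (card S0) \<le> card {i\<in>S0. toggle S i \<in> H}"
    using huang_induced_subgraph[OF fin \<open>S0 \<noteq> {}\<close>, of H] by (auto simp: H_def)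
  have S_cube: "S \<subseteq> {..<n}" using S S0(1) by (auto simp: H_def)
  then have "card {i\<in>S0. toggle S i \<in> H} \<le> sens_at n f (cube_point S)"
    using level_set_degree_le_sens_at[OF assms(2) _ S _ S0(1), of s] by (auto simp: H_def)
  also have "\<dots> \<le> sensitivity n f"
    using sens_at_le_sensitivity cube_point_in_cube[OF S_cube] by blast
  finally show ?thesis using degree S0(2) by (simp add: order_trans)
qed simp

end
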